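(* Let $d\ge1$, $N\ge1$ be integers, let $f:\{0,1\}^\ell\to\{0,1\}^{N+1}$ be $d$-local, and let $b$ satisfy $b^2\ge\frac14\big(1-(2d)^{-\ln 4}\big)$. Then for every function $g:\{0,1\}^N\to\{0,1\}$, $$\Delta\big(f(B_b^{\otimes\ell}),(X,g(X))\big)\ \ge\ \tfrac12-\tfrac1N,$$ where $X$ is uniform on $\{0,1\}^N$.
   Context: $B_b$ is the Bernoulli random variable equal to $0$ with probability $1/2+b$ and $1$ with probability $1/2-b$; $B_b^{\otimes\ell}$ denotes $\ell$ i.i.d. copies. A function is $d$-local if each output bit depends on at most $d$ input bits. $\Delta$ is total variation distance. *)

theory Defs
  imports "HOL-Probability.Probability"
begin

text \<open>Bits are booleans (True = 1). B_b is 0 w.p. 1/2+b and 1 w.p. 1/2-b.\<close>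
definition B :: "real \<Rightarrow> bool pmf" where
  "B b = bernoulli_pmf (1/2 - b)"

definition tv_dist :: "'a pmf \<Rightarrow> 'a pmf \<Rightarrow> real" where
  "tv_dist p q = (SUP A. \<bar>measure_pmf.prob p A - measure_pmf.prob q A\<bar>)"

definition local_fun :: "nat \<Rightarrow> nat \<Rightarrow> nat \<Rightarrow> (bool list \<Rightarrow> bool list) \<Rightarrow> bool" where
  "local_fun d l m f \<longleftrightarrow>
     (\<forall>xs. length xs = l \<longrightarrow> length (f xs) = m) \<and>
     (\<forall>i<m. \<exists>S. S \<subseteq> {..<l} \<and> card S \<le> d \<and>
        (\<forall>xs ys. length xs = l \<longrightarrow> length ys = l \<longrightarrow>
           (\<forall>j\<in>S. xs ! j = ys ! j) \<longrightarrow> f xs ! i = f ys ! i))"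

end

theory Submission
  imports Defs "HOL-Analysis.Harmonic_Numbers"
begin

text \<open>
  Let \<open>v\<close> be the more likely value of \<open>B\<^sub>b\<close>; each input bit differs from \<open>v\<close> with probability
  \<open>q = 1/2 - \<bar>b\<bar>\<close>, and the hypothesis on \<open>b\<close> forces \<open>d q \<le> 1/8\<close>. The first three output bits of
  \<open>f\<close> depend on at most \<open>3d\<close> input bits, so by the union bound they coincide with their value
  on the constant input \<open>v\<^sup>\<ell>\<close> with probability at least \<open>1 - 3dq \<ge> 5/8\<close>. Under \<open>(X, g(X))\<close> with
  \<open>N \<ge> 3\<close> the first three bits are uniform, so any fixed prefix has probability \<open>1/8\<close>.
  Hence the total variation distance is at least \<open>1/2\<close>; for \<open>N \<le> 2\<close> the bound is trivial.
\<close>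

lemma tv_dist_ge:
  "\<bar>measure_pmf.prob p A - measure_pmf.prob q A\<bar> \<le> tv_dist p q"
  unfolding tv_dist_def
proof (rule cSUP_upper)
  have "\<bar>measure_pmf.prob p A' - measure_pmf.prob q A'\<bar> \<le> 1" for A'
    using measure_pmf.prob_le_1[of p A'] measure_pmf.prob_le_1[of q A']
      measure_nonneg[of p A'] measure_nonneg[of q A'] by linarith
  then show "bdd_above (range (\<lambda>A. \<bar>measure_pmf.prob p A - measure_pmf.prob q A\<bar>))"
    by (intro bdd_aboveI) auto
qed simp

lemma tv_dist_nonneg: "0 \<le> tv_dist p q"
  using tv_dist_ge[of p "{}" q] by simp

lemma mult_powr_neg_ln4_le:
  assumes "d \<ge> 1"
  shows "real d * (2 * real d) powr (- ln 4) \<le> 2/5"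
proof -
  define D where "D = 2 * real d"
  have D: "D \<ge> 2" using assms unfolding D_def by simp
  have "ln (4::real) \<ge> 4/3"
    using ln_mult[of 2 2] ln2_ge_two_thirds by simp
  then have "D powr (- ln 4) \<le> D powr (-1/3 + -1)"
    using D by (intro powr_mono) auto
  also have "\<dots> = D powr (-1/3) / D"
    using D by (simp only: powr_add) (simp add: powr_minus_divide)
  finally have "real d * D powr (- ln 4) \<le> real d * (D powr (-1/3) / D)"
    by (rule mult_left_mono) simp
  also have "\<dots> = D powr (-1/3) / 2"
    using D by (simp add: D_def)
  also have "D powr (-1/3) \<le> 2 powr (-1/3)"
    using D by (intro powr_mono2') auto
  also have "(2::real) powr (-1/3) \<le> 4/5"
  proof (rule ccontr)
    assume "\<not> ?thesis"
    then have "(4/5::real) ^ 3 < (2 powr (-1/3)) ^ 3"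
      by (intro power_strict_mono) auto
    also have "(2 powr (-1/3::real)) ^ 3 = 1/2"
      by (subst powr_power) simp_all
    finally show False by (simp add: eval_nat_numeral)
  qed
  finally show ?thesis by (simp add: D_def)
qed

text \<open>Solving \<open>q (1 - q) = 1/4 - b\<^sup>2 \<le> y/4\<close> for the small root \<open>q = 1/2 - \<bar>b\<bar>\<close>.\<close>

lemma bias_gap_le:
  assumes "d \<ge> 1" and "\<bar>b\<bar> \<le> 1/2"
    and "b ^ 2 \<ge> 1/4 * (1 - (2 * real d) powr (- ln 4))"
  shows "real d * (1/2 - \<bar>b\<bar>) \<le> 1/8"
proof -
  define y where "y = (2 * real d) powr (- ln 4)"
  define q where "q = 1/2 - \<bar>b\<bar>"
  have dy: "real d * y \<le> 2/5"
    unfolding y_def using assms(1) by (rule mult_powr_neg_ln4_le)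
  moreover have "y \<le> real d * y"
    using assms(1) by (simp add: y_def mult_le_cancel_right1)
  ultimately have y: "y \<le> 2/5" by simp
  have q: "0 \<le> q" "q \<le> 1/2" using assms(2) unfolding q_def by auto
  have qq: "q * (1 - q) \<le> y / 4"
  proof -
    have "q * (1 - q) = 1/4 - b ^ 2"
      unfolding q_def by (simp add: algebra_simps power2_eq_square abs_mult_self_eq)
    then show ?thesis using assms(3) unfolding y_def by simp
  qed
  have "q * (1/2) \<le> q * (1 - q)" using q by (intro mult_left_mono) auto
  then have "q \<le> 1/5" using qq y by simp
  then have "q * (4/5) \<le> q * (1 - q)" using q by (intro mult_left_mono) auto
  then have "q \<le> 5/16 * y" using qq by simp
  then have "real d * q \<le> real d * (5/16 * y)"
    by (rule mult_left_mono) simp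
  also have "\<dots> = 5/16 * (real d * y)" by simp
  also have "\<dots> \<le> 1/8" using dy by (simp add: mult.commute)
  finally show ?thesis unfolding q_def .
qed

lemma pmf_B_less_likely:
  assumes "\<bar>b\<bar> \<le> 1/2"
  shows "1 - pmf (B b) (b < 0) = 1/2 - \<bar>b\<bar>"
  using assms unfolding B_def
  by (cases "b < 0") (auto simp: pmf_bernoulli_True pmf_bernoulli_False)

lemma map_pmf_nth_replicate_pmf:
  assumes "j < l"
  shows "map_pmf (\<lambda>xs. xs ! j) (replicate_pmf l p) = p"
  using assms
proof (induction l arbitrary: j)
  case 0
  then show ?case by simp
next
  case (Suc l)
  show ?case
  proof (cases j)
    case 0
    then show ?thesis
      by (simp add: map_bind_pmf pmf.map_comp o_def map_pmf_const bind_return_pmf')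
  next
    case (Suc k)
    with Suc.prems Suc.IH[of k, unfolded map_pmf_def] show ?thesis
      by (simp add: map_bind_pmf pmf.map_comp o_def bind_pmf_const)
  qed
qed

lemma prob_replicate_pmf_all_eq_ge:
  assumes "U \<subseteq> {..<l}"
  shows "measure_pmf.prob (replicate_pmf l p) {xs. \<forall>j\<in>U. xs ! j = v}
           \<ge> 1 - real (card U) * (1 - pmf p v)"
proof -
  let ?R = "replicate_pmf l p"
  have "finite U" using assms finite_subset by blast
  have coord: "measure_pmf.prob ?R {xs. xs ! j \<noteq> v} = 1 - pmf p v" if "j \<in> U" for j
  proof -
    have "measure_pmf.prob ?R {xs. xs ! j \<noteq> v}
            = measure_pmf.prob (map_pmf (\<lambda>xs. xs ! j) ?R) (- {v})"
      by (simp add: vimage_def)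
    also have "\<dots> = measure_pmf.prob p (- {v})"
      using that assms by (simp add: map_pmf_nth_replicate_pmf subset_eq)
    also have "\<dots> = 1 - pmf p v"
      using measure_pmf.prob_compl[of "{v}" p] by (simp add: measure_pmf_single Compl_eq_Diff_UNIV)
    finally show ?thesis .
  qed
  have "measure_pmf.prob ?R (\<Union>j\<in>U. {xs. xs ! j \<noteq> v})
          \<le> (\<Sum>j\<in>U. measure_pmf.prob ?R {xs. xs ! j \<noteq> v})"
    using \<open>finite U\<close> by (intro measure_pmf.finite_measure_subadditive_finite) auto
  also have "\<dots> = real (card U) * (1 - pmf p v)"
    using coord by simp
  finally have union: "measure_pmf.prob ?R (\<Union>j\<in>U. {xs. xs ! j \<noteq> v})
                         \<le> real (card U) * (1 - pmf p v)" .
  have "{xs. \<forall>j\<in>U. xs ! j = v} = space (measure_pmf ?R) - (\<Union>j\<in>U. {xs. xs ! j \<noteq> v})"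
    by auto
  then show ?thesis
    using union by (simp only:) (subst measure_pmf.prob_compl; simp)
qed

lemma local_fun_length:
  "local_fun d l m f \<Longrightarrow> length xs = l \<Longrightarrow> length (f xs) = m"
  unfolding local_fun_def by blast

lemma local_fun_prefix_determined:
  assumes "local_fun d l m f" and "k \<le> m"
  obtains U where "U \<subseteq> {..<l}" and "card U \<le> k * d"
    and "\<And>xs ys. length xs = l \<Longrightarrow> length ys = l \<Longrightarrow> \<forall>j\<in>U. xs ! j = ys ! j
           \<Longrightarrow> take k (f xs) = take k (f ys)"
proof -
  from assms(1) obtain S where S: "\<And>i. i < m \<Longrightarrow> S i \<subseteq> {..<l} \<and> card (S i) \<le> d \<and>
      (\<forall>xs ys. length xs = l \<longrightarrow> length ys = l \<longrightarrow>
         (\<forall>j\<in>S i. xs ! j = ys ! j) \<longrightarrow> f xs ! i = f ys ! i)"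
    unfolding local_fun_def by metis
  define U where "U = (\<Union>i<k. S i)"
  show ?thesis
  proof
    show "U \<subseteq> {..<l}"
      unfolding U_def
    proof (rule UN_least)
      fix i assume "i \<in> {..<k}"
      then show "S i \<subseteq> {..<l}" using S[of i] assms(2) by simp
    qed
    have "card U \<le> (\<Sum>i<k. card (S i))"
      unfolding U_def by (rule card_UN_le) simp
    also have "\<dots> \<le> (\<Sum>i<k. d)"
      using S assms(2) by (intro sum_mono) fastforce
    finally show "card U \<le> k * d" by simp
  next
    fix xs ys :: "bool list"
    assume xs: "length xs = l" and ys: "length ys = l" and agree: "\<forall>j\<in>U. xs ! j = ys ! j"
    have "f xs ! i = f ys ! i" if "i < k" for i
    proof -
      have "i < m" using that assms(2) by simp
      moreover have "\<forall>j\<in>S i. xs ! j = ys ! j"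
        using agree that unfolding U_def by auto
      ultimately show ?thesis using S[of i] xs ys by blast
    qed
    then show "take k (f xs) = take k (f ys)"
      using local_fun_length[OF assms(1)] xs ys assms(2) by (intro nth_equalityI) auto
  qed
qed

lemma prob_local_fun_prefix_ge:
  assumes "local_fun d l m f" and "k \<le> m"
  shows "measure_pmf.prob (map_pmf f (replicate_pmf l p))
             {ys. take k ys = take k (f (replicate l v))}
           \<ge> 1 - real (k * d) * (1 - pmf p v)"
proof -
  let ?R = "replicate_pmf l p"
  let ?E = "{ys. take k ys = take k (f (replicate l v))}"
  obtain U where U: "U \<subseteq> {..<l}" "card U \<le> k * d"
    and determined: "\<And>xs ys. length xs = l \<Longrightarrow> length ys = l \<Longrightarrow> \<forall>j\<in>U. xs ! j = ys ! j
           \<Longrightarrow> take k (f xs) = take k (f ys)"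
    using local_fun_prefix_determined[OF assms] by blast
  have "{xs. \<forall>j\<in>U. xs ! j = v} \<inter> set_pmf ?R \<subseteq> f -` ?E \<inter> set_pmf ?R"
    using U(1) by (auto simp: set_replicate_pmf subset_eq intro!: determined)
  then have "measure_pmf.prob ?R {xs. \<forall>j\<in>U. xs ! j = v} \<le> measure_pmf.prob ?R (f -` ?E)"
    by (subst (1 2) measure_Int_set_pmf[symmetric]) (rule measure_pmf.finite_measure_mono, auto)
  moreover have "real (card U) \<le> real (k * d)"
    using U(2) by (rule of_nat_mono)
  then have "real (card U) * (1 - pmf p v) \<le> real (k * d) * (1 - pmf p v)"
    by (rule mult_right_mono) (simp add: pmf_le_1)
  ultimately show ?thesis
    using prob_replicate_pmf_all_eq_ge[OF U(1), of p v] by simp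
qed

lemma card_bool_lists_length: "card {xs :: bool list. length xs = n} = 2 ^ n"
  using card_lists_length_eq[of "UNIV :: bool set" n] by simp

lemma finite_bool_lists_length: "finite {xs :: bool list. length xs = n}"
  using finite_lists_length_eq[of "UNIV :: bool set" n] by simp

lemma bool_lists_length_nonempty: "{xs :: bool list. length xs = n} \<noteq> {}"
  by (auto intro: exI[of _ "replicate n True"])

lemma set_pmf_uniform_bool_lists:
  "set_pmf (pmf_of_set {xs :: bool list. length xs = n}) = {xs. length xs = n}"
  using bool_lists_length_nonempty finite_bool_lists_length by (rule set_pmf_of_set)

lemma prob_uniform_bool_lists_prefix:
  assumes "length w = k" and "k \<le> n"
  shows "measure_pmf.prob (pmf_of_set {xs :: bool list. length xs = n}) {xs. take k xs = w}
           = 1 / 2 ^ k"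
proof -
  let ?L = "{xs :: bool list. length xs = n}"
  have "?L \<inter> {xs. take k xs = w} = (\<lambda>ys. w @ ys) ` {ys. length ys = n - k}"
  proof (intro equalityI subsetI)
    fix xs assume "xs \<in> ?L \<inter> {xs. take k xs = w}"
    then show "xs \<in> (\<lambda>ys. w @ ys) ` {ys. length ys = n - k}"
      by (intro image_eqI[of _ _ "drop k xs"]) auto
  qed (use assms in auto)
  then have "card (?L \<inter> {xs. take k xs = w}) = 2 ^ (n - k)"
    by (simp add: card_image inj_on_def card_bool_lists_length)
  moreover have "(2::real) ^ n = 2 ^ (n - k) * 2 ^ k"
    using assms(2) by (simp flip: power_add)
  ultimately show ?thesis
    by (simp add: measure_pmf_of_set[OF bool_lists_length_nonempty finite_bool_lists_length]
        card_bool_lists_length)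
qed

lemma prob_extended_uniform_bool_lists_prefix:
  assumes "length w = k" and "k \<le> n"
  shows "measure_pmf.prob (map_pmf (\<lambda>xs. xs @ h xs) (pmf_of_set {xs :: bool list. length xs = n}))
             {ys. take k ys = w}
           = 1 / 2 ^ k"
proof -
  let ?X = "pmf_of_set {xs :: bool list. length xs = n}"
  have on_support: "(\<lambda>xs. xs @ h xs) -` {ys. take k ys = w} \<inter> set_pmf ?X
                      = {xs. take k xs = w} \<inter> set_pmf ?X"
    using assms(2) by (auto simp: set_pmf_uniform_bool_lists)
  have "measure_pmf.prob (map_pmf (\<lambda>xs. xs @ h xs) ?X) {ys. take k ys = w}
          = measure_pmf.prob ?X ((\<lambda>xs. xs @ h xs) -` {ys. take k ys = w} \<inter> set_pmf ?X)"
    by (simp add: measure_Int_set_pmf)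
  also have "\<dots> = measure_pmf.prob ?X {xs. take k xs = w}"
    unfolding on_support by (rule measure_Int_set_pmf)
  also have "\<dots> = 1 / 2 ^ k"
    using assms by (rule prob_uniform_bool_lists_prefix)
  finally show ?thesis .
qed

theorem lemmaC1:
  fixes d N l :: nat and b :: real
    and f :: "bool list \<Rightarrow> bool list" and g :: "bool list \<Rightarrow> bool"
  assumes "d \<ge> 1" and "N \<ge> 1"
    and "local_fun d l (N + 1) f"
    and "\<bar>b\<bar> \<le> 1/2"
    and "b ^ 2 \<ge> 1/4 * (1 - (2 * real d) powr (- ln 4))"
  shows "tv_dist (map_pmf f (replicate_pmf l (B b)))
                 (map_pmf (\<lambda>xs. xs @ [g xs]) (pmf_of_set {xs :: bool list. length xs = N}))
           \<ge> 1/2 - 1 / real N"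
proof (cases "N \<ge> 3")
  case False
  with assms(2) have "1/2 - 1 / real N \<le> 0"
    by (cases "N = 1") (auto simp: field_simps)
  then show ?thesis using tv_dist_nonneg by (rule order_trans)
next
  case True
  let ?P = "map_pmf f (replicate_pmf l (B b))"
  let ?Q = "map_pmf (\<lambda>xs. xs @ [g xs]) (pmf_of_set {xs :: bool list. length xs = N})"
  define w where "w = take 3 (f (replicate l (b < 0)))"
  let ?E = "{ys. take 3 ys = w}"
  have "measure_pmf.prob ?P ?E \<ge> 1 - real (3 * d) * (1/2 - \<bar>b\<bar>)"
    using prob_local_fun_prefix_ge[OF assms(3), of 3 "B b" "b < 0"] True
    unfolding w_def pmf_B_less_likely[OF assms(4)] by simp
  moreover have "real (3 * d) * (1/2 - \<bar>b\<bar>) \<le> 3/8"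
    using bias_gap_le[OF assms(1,4,5)] by simp
  ultimately have P: "measure_pmf.prob ?P ?E \<ge> 5/8" by linarith
  have "length w = 3"
    using local_fun_length[OF assms(3)] True unfolding w_def by simp
  then have "measure_pmf.prob ?Q ?E = 1/8"
    using prob_extended_uniform_bool_lists_prefix[of w 3 N] True by simp
  with P have "1/2 \<le> \<bar>measure_pmf.prob ?P ?E - measure_pmf.prob ?Q ?E\<bar>"
    by simp
  also have "\<dots> \<le> tv_dist ?P ?Q"
    by (rule tv_dist_ge)
  finally show ?thesis
    by (smt (verit) of_nat_0_le_iff divide_nonneg_nonneg)
qed

end
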